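(* Let $V$ be a finite set, $C$ a partition of $V$, $k>0$, and let $G=(V,E)$ be the clique graph of $C$ with edge weight $k$. Then for every nonempty $d\subseteq V$, $\frac{w_d}{v_d}\le f_C(d)$.
   Context: The clique graph of a partition $C$ of $V$ with edge weight $k$ is $G=(V,E)$ with $E(i,j)=k$ if $i$ and $j$ lie in the same block of $C$ (including $i=j$) and $E(i,j)=0$ otherwise. For $d\subseteq V$: $v_d=\sum_{i\in d}\sum_{j\in V}E(i,j)$ and $w_d=\sum_{i,j\in d}E(i,j)$. Further $f_C(d)=\max_{c\in C}\frac{|c\cap d|}{|c|}$. *)

theory Defs
  imports Complex_Main "HOL-Library.Disjoint_Sets"
begin

definition clique_graph :: "'a set set \<Rightarrow> real \<Rightarrow> 'a \<Rightarrow> 'a \<Rightarrow> real" where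
  "clique_graph C k i j = (if \<exists>c\<in>C. i \<in> c \<and> j \<in> c then k else 0)"

definition vol :: "'a set \<Rightarrow> ('a \<Rightarrow> 'a \<Rightarrow> real) \<Rightarrow> 'a set \<Rightarrow> real" where
  "vol V E d = (\<Sum>i\<in>d. \<Sum>j\<in>V. E i j)"

definition wgt :: "('a \<Rightarrow> 'a \<Rightarrow> real) \<Rightarrow> 'a set \<Rightarrow> real" where
  "wgt E d = (\<Sum>i\<in>d. \<Sum>j\<in>d. E i j)"

definition fC :: "'a set set \<Rightarrow> 'a set \<Rightarrow> real" where
  "fC C d = Max ((\<lambda>c. real (card (c \<inter> d)) / real (card c)) ` C)"

end

theory Submission
  imports Defs
begin

text \<open>Each vertex i lies in exactly one block c of C, and its row of the weight matrix is k on c and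
  0 elsewhere. Hence the i-th summand of w_d is k |c \<inter> d| while that of v_d is k |c|, and
  |c \<inter> d| \<le> f_C(d) |c| by the definition of f_C; summing over i \<in> d gives w_d \<le> f_C(d) v_d.\<close>

lemma clique_graph_in_block:
  assumes "disjoint C" "c \<in> C" "i \<in> c"
  shows "clique_graph C k i j = (if j \<in> c then k else 0)"
proof -
  have "(\<exists>c'\<in>C. i \<in> c' \<and> j \<in> c') \<longleftrightarrow> j \<in> c"
    using assms disjointD by blast
  then show ?thesis
    unfolding clique_graph_def by simp
qed

lemma sum_clique_graph_row:
  assumes "disjoint C" "c \<in> C" "i \<in> c" "finite A"
  shows "(\<Sum>j\<in>A. clique_graph C k i j) = k * card (A \<inter> c)"
proof -
  have "(\<Sum>j\<in>A. clique_graph C k i j) = (\<Sum>j\<in>A. if j \<in> c then k else 0)"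
    using clique_graph_in_block[OF assms(1-3)] by simp
  also have "\<dots> = k * card (A \<inter> c)"
    using assms(4) by (simp add: sum.If_cases)
  finally show ?thesis .
qed

lemma fC_ge:
  assumes "finite C" "c \<in> C"
  shows "real (card (c \<inter> d)) / real (card c) \<le> fC C d"
  unfolding fC_def using assms by (intro Max_ge) auto

lemma clique_graph_row_le_fC:
  assumes "finite V" "partition_on V C" "k \<ge> 0" "d \<subseteq> V" "i \<in> V"
  shows "(\<Sum>j\<in>d. clique_graph C k i j) \<le> fC C d * (\<Sum>j\<in>V. clique_graph C k i j)"
proof -
  have disj: "disjoint C" and V_Union: "V = \<Union>C"
    using partition_onD1 partition_onD2 assms(2) by auto
  obtain c where c: "c \<in> C" "i \<in> c"
    using assms(5) V_Union by auto
  have "c \<subseteq> V" "finite c"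
    using c V_Union assms(1) by (auto intro: finite_subset)
  then have card_c: "card c > 0"
    using c(2) card_gt_0_iff by blast
  have "real (card (c \<inter> d)) \<le> fC C d * real (card c)"
    using fC_ge[OF finite_elements[OF assms(1,2)] c(1), of d] card_c
    by (simp add: divide_le_eq)
  then have "k * card (d \<inter> c) \<le> fC C d * (k * card (V \<inter> c))"
    using \<open>c \<subseteq> V\<close> assms(3) mult_left_mono
    by (fastforce simp: Int_commute Int_absorb1 mult.left_commute)
  then show ?thesis
    using sum_clique_graph_row[OF disj c] assms(1,4) finite_subset by metis
qed

lemma wgt_le_fC_vol:
  assumes "finite V" "partition_on V C" "k \<ge> 0" "d \<subseteq> V"
  shows "wgt (clique_graph C k) d \<le> fC C d * vol V (clique_graph C k) d"
proof -
  have "wgt (clique_graph C k) d \<le> (\<Sum>i\<in>d. fC C d * (\<Sum>j\<in>V. clique_graph C k i j))"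
    unfolding wgt_def using clique_graph_row_le_fC[OF assms] assms(4)
    by (intro sum_mono) blast
  also have "\<dots> = fC C d * vol V (clique_graph C k) d"
    unfolding vol_def by (rule sum_distrib_left[symmetric])
  finally show ?thesis .
qed

lemma vol_clique_graph_pos:
  assumes "finite V" "partition_on V C" "k > 0" "d \<subseteq> V" "d \<noteq> {}"
  shows "vol V (clique_graph C k) d > 0"
  unfolding vol_def
proof (rule sum_pos)
  show "finite d" "d \<noteq> {}"
    using assms(1,4,5) finite_subset by auto
  fix i assume "i \<in> d"
  then have "i \<in> V" using assms(4) by auto
  then have "clique_graph C k i i > 0"
    using partition_onD1[OF assms(2)] assms(3) unfolding clique_graph_def by auto
  moreover have "clique_graph C k i j \<ge> 0" for j
    using assms(3) unfolding clique_graph_def by simp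
  ultimately show "(\<Sum>j\<in>V. clique_graph C k i j) > 0"
    using \<open>i \<in> V\<close> assms(1) by (metis sum_pos2)
qed

theorem lemma1:
  fixes V :: "'a set" and C :: "'a set set" and k :: real and d :: "'a set"
  assumes "finite V" and "partition_on V C" and "k > 0"
    and "d \<subseteq> V" and "d \<noteq> {}"
  shows "wgt (clique_graph C k) d / vol V (clique_graph C k) d \<le> fC C d"
  using wgt_le_fC_vol[of V C k d] vol_clique_graph_pos[OF assms] assms
  by (simp add: divide_le_eq)

end
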